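(* For all $n\ge1$, $a_{\{0101,0102,0112,0120,0121\}}(n)=(n-1)^2+1$.
   Context: An ascent in an integer sequence $s_1\cdots s_m$ is an index $j$ with $s_j<s_{j+1}$; $\mathrm{asc}$ denotes the number of ascents. An ascent sequence is a sequence $x_1\cdots x_n$ of nonnegative integers with $x_1=0$ and $x_i\le 1+\mathrm{asc}(x_1\cdots x_{i-1})$ for all $i\ge2$. The reduction $\mathrm{red}(w)$ of an integer sequence $w$ replaces the $i$-th smallest distinct letter of $w$ by $i-1$; a pattern is a reduced sequence. A sequence $x$ contains a pattern $p=p_1\cdots p_k$ if there are indices $i_1<\cdots<i_k$ with $\mathrm{red}(x_{i_1}\cdots x_{i_k})=p$; otherwise $x$ avoids $p$. For a finite set $P$ of patterns, $a_P(n)$ denotes the number of ascent sequences of length $n$ avoiding every pattern in $P$. *)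

theory Defs
  imports Main
begin

definition asc :: "nat list \<Rightarrow> nat" where
  "asc s = card {j. Suc j < length s \<and> s ! j < s ! Suc j}"

(* ascent sequences: x_1 = 0 and x_i <= 1 + asc(x_1...x_{i-1}) for i >= 2 (0-based indices here) *)
definition is_ascent_seq :: "nat list \<Rightarrow> bool" where
  "is_ascent_seq x \<longleftrightarrow> x \<noteq> [] \<and> x ! 0 = 0 \<and>
     (\<forall>i. 0 < i \<and> i < length x \<longrightarrow> x ! i \<le> 1 + asc (take i x))"

definition red :: "nat list \<Rightarrow> nat list" where
  "red w = map (\<lambda>a. card {b \<in> set w. b < a}) w"

definition contains :: "nat list \<Rightarrow> nat list \<Rightarrow> bool" where
  "contains x p \<longleftrightarrow> (\<exists>I. I \<subseteq> {..<length x} \<and> red (nths x I) = p)"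

definition avoids :: "nat list \<Rightarrow> nat list \<Rightarrow> bool" where
  "avoids x p \<longleftrightarrow> \<not> contains x p"

definition a_P :: "nat list set \<Rightarrow> nat \<Rightarrow> nat" where
  "a_P P n = card {x. length x = n \<and> is_ascent_seq x \<and> (\<forall>p\<in>P. avoids x p)}"

end

theory Submission
  imports Defs
begin

(* Apart from 0^n, an ascent sequence avoiding the five patterns is either a block
   0^s 1^(t-s) 0^(n-t) with 1 <= s < t <= n, or a ramp 0^s 1 2 ... k k ... k that climbs by
   one up to position e and then stays constant, with 1 <= s < e < n.  By induction on the
   length: appending a letter permitted by the ascent condition to a sequence of one of these
   shapes either keeps the shape or completes one of the patterns at the new letter.
   Sending (a, b) in [1, n-1]^2 to the block with s = a, t = b + 1 if a <= b and to the ramp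
   with s = b, e = a if a > b is a bijection onto the nonzero avoiders, whence (n-1)^2 + 1. *)

section \<open>Reduction and pattern containment\<close>

lemma length_red [simp]: "length (red w) = length w"
  by (simp add: red_def)

lemma red_nth_less_iff:
  assumes "i < length w" "j < length w"
  shows "red w ! i < red w ! j \<longleftrightarrow> w ! i < w ! j"
proof
  assume "w ! i < w ! j"
  then have "{b \<in> set w. b < w ! i} \<subset> {b \<in> set w. b < w ! j}"
    using assms(1) nth_mem by fastforce
  then show "red w ! i < red w ! j"
    using assms by (simp add: red_def psubset_card_mono)
next
  assume "red w ! i < red w ! j"
  moreover have "w ! j \<le> w ! i \<Longrightarrow> card {b \<in> set w. b < w ! j} \<le> card {b \<in> set w. b < w ! i}"
    by (intro card_mono) auto
  ultimately show "w ! i < w ! j"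
    using assms by (force simp: red_def)
qed

lemma card_less_le_if_same_order:
  fixes v w :: "'a :: linorder list"
  assumes len: "length v = length w" and i: "i < length w"
    and ord: "\<And>j k. j < length w \<Longrightarrow> k < length w \<Longrightarrow> w ! j < w ! k \<longleftrightarrow> v ! j < v ! k"
  shows "card {b \<in> set w. b < w ! i} \<le> card {c \<in> set v. c < v ! i}"
proof -
  define idx where "idx b = (SOME j. j < length w \<and> w ! j = b)" for b
  have idx: "idx b < length w \<and> w ! idx b = b" if "b \<in> set w" for b
    using that unfolding idx_def in_set_conv_nth by (rule someI_ex)
  have "inj_on (\<lambda>b. v ! idx b) (set w)"
  proof (rule inj_onI)
    fix b b' assume "b \<in> set w" "b' \<in> set w" and eq: "v ! idx b = v ! idx b'"
    then have "b < b' \<longleftrightarrow> v ! idx b < v ! idx b'" "b' < b \<longleftrightarrow> v ! idx b' < v ! idx b"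
      using idx ord by metis+
    then show "b = b'"
      using eq by auto
  qed
  moreover have "v ! idx b \<in> {c \<in> set v. c < v ! i}" if "b \<in> set w" "b < w ! i" for b
    using that idx[OF \<open>b \<in> set w\<close>] ord[of "idx b" i] i len by auto
  ultimately show ?thesis
    by (intro card_inj_on_le) (auto intro: inj_on_subset)
qed

lemma red_eq_red_iff:
  assumes len: "length v = length w"
  shows "red v = red w \<longleftrightarrow> (\<forall>i < length w. \<forall>j < length w. v ! i < v ! j \<longleftrightarrow> w ! i < w ! j)"
proof
  assume red: "red v = red w"
  show "\<forall>i < length w. \<forall>j < length w. v ! i < v ! j \<longleftrightarrow> w ! i < w ! j"
  proof (intro allI impI)
    fix i j assume "i < length w" "j < length w"
    then show "v ! i < v ! j \<longleftrightarrow> w ! i < w ! j"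
      using red_nth_less_iff[of i v j] red_nth_less_iff[of i w j] len red by simp
  qed
next
  assume ord: "\<forall>i < length w. \<forall>j < length w. v ! i < v ! j \<longleftrightarrow> w ! i < w ! j"
  have "card {b \<in> set v. b < v ! i} = card {b \<in> set w. b < w ! i}" if "i < length w" for i
    using card_less_le_if_same_order[of v w i] card_less_le_if_same_order[of w v i] len ord that
    by (simp add: le_antisym)
  then show "red v = red w"
    using len by (intro nth_equalityI) (auto simp: red_def)
qed

lemma red_eq_self_if_set_eq_lessThan:
  assumes "set w = {..<k}"
  shows "red w = w"
proof (rule nth_equalityI)
  fix i assume "i < length (red w)"
  then have "w ! i < k"
    using assms nth_mem by fastforce
  moreover have "{b \<in> {..<k}. b < w ! i} = {..<w ! i}" if "w ! i < k"
    using that by auto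
  ultimately show "red w ! i = w ! i"
    using \<open>i < length (red w)\<close> assms by (simp add: red_def)
qed simp

lemma red_eq_pattern_iff:
  assumes "set p = {..<k}" "length w = length p"
  shows "red w = p \<longleftrightarrow> (\<forall>i < length p. \<forall>j < length p. w ! i < w ! j \<longleftrightarrow> p ! i < p ! j)"
  using red_eq_red_iff[OF assms(2)] red_eq_self_if_set_eq_lessThan[OF assms(1)] by simp

lemma nths_eq_map_filter: "nths xs I = map ((!) xs) (filter (\<lambda>i. i \<in> I) [0..<length xs])"
proof -
  have "zip xs [0..<length xs] = map (\<lambda>i. (xs ! i, i)) [0..<length xs]"
    by (rule nth_equalityI) auto
  then show ?thesis
    by (simp add: nths_def filter_map comp_def)
qed

lemma nths_set_sorted:
  assumes "sorted_wrt (<) is" "\<forall>i \<in> set is. i < length xs"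
  shows "nths xs (set is) = map ((!) xs) is"
proof -
  have "filter (\<lambda>i. i \<in> set is) [0..<length xs] = is"
    using assms by (intro sorted_distinct_set_unique)
      (auto simp: sorted_wrt_filter strict_sorted_iff)
  then show ?thesis
    by (simp add: nths_eq_map_filter)
qed

lemma contains_iff_indices:
  "contains x p \<longleftrightarrow>
     (\<exists>is. sorted_wrt (<) is \<and> (\<forall>i \<in> set is. i < length x) \<and> red (map ((!) x) is) = p)"
proof
  assume "contains x p"
  then obtain I where "red (nths x I) = p"
    unfolding contains_def by blast
  then show "\<exists>is. sorted_wrt (<) is \<and> (\<forall>i \<in> set is. i < length x) \<and> red (map ((!) x) is) = p"
    by (intro exI[of _ "filter (\<lambda>i. i \<in> I) [0..<length x]"])
      (simp add: nths_eq_map_filter sorted_wrt_filter)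
next
  assume "\<exists>is. sorted_wrt (<) is \<and> (\<forall>i \<in> set is. i < length x) \<and> red (map ((!) x) is) = p"
  then obtain "is" where "sorted_wrt (<) is" "\<forall>i \<in> set is. i < length x" "red (map ((!) x) is) = p"
    by blast
  then show "contains x p"
    unfolding contains_def by (intro exI[of _ "set is"]) (auto simp: nths_set_sorted)
qed

section \<open>Ascents\<close>

lemma asc_snoc: "asc (y @ [v]) = asc y + (if y \<noteq> [] \<and> last y < v then 1 else 0)"
proof -
  have "Suc j < length (y @ [v]) \<and> (y @ [v]) ! j < (y @ [v]) ! Suc j \<longleftrightarrow>
      (Suc j < length y \<and> y ! j < y ! Suc j) \<or> (Suc j = length y \<and> y ! j < v)" for j
    by (cases "Suc j < length y") (auto simp: nth_append)
  then have "{j. Suc j < length (y @ [v]) \<and> (y @ [v]) ! j < (y @ [v]) ! Suc j} =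
      {j. Suc j < length y \<and> y ! j < y ! Suc j} \<union> {j. Suc j = length y \<and> y ! j < v}"
    by blast
  moreover have "{j. Suc j = length y \<and> y ! j < v} = (if y \<noteq> [] \<and> last y < v then {length y - 1} else {})"
    by (cases y rule: rev_cases) auto
  moreover have "finite {j. Suc j < length y \<and> y ! j < y ! Suc j}"
    by (rule finite_subset[of _ "{..<length y}"]) auto
  ultimately show ?thesis
    unfolding asc_def by (auto simp: card_Un_disjoint)
qed

lemma asc_le_card:
  assumes "finite S" "\<And>j. Suc j < length x \<Longrightarrow> x ! j < x ! Suc j \<Longrightarrow> j \<in> S"
  shows "asc x \<le> card S"
  unfolding asc_def using assms by (intro card_mono) auto

lemma asc_replicate [simp]: "asc (replicate n a) = 0"
  using asc_le_card[of "{}" "replicate n a"] by simp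

lemma is_ascent_seq_snocD:
  assumes "is_ascent_seq (x @ [v])" "x \<noteq> []"
  shows "is_ascent_seq x" "v \<le> 1 + asc x"
proof -
  have ascent_bound: "(x @ [v]) ! i \<le> 1 + asc (take i (x @ [v]))" if "0 < i" "i \<le> length x" for i
    using assms(1) that unfolding is_ascent_seq_def by simp
  show "v \<le> 1 + asc x"
    using ascent_bound[of "length x"] assms(2) by simp
  have "x ! i \<le> 1 + asc (take i x)" if "0 < i" "i < length x" for i
    using ascent_bound[of i] that by (simp add: nth_append)
  then show "is_ascent_seq x"
    using assms unfolding is_ascent_seq_def by (auto simp: nth_append)
qed

lemma is_ascent_seq_if_steps_le_one:
  assumes "x \<noteq> []" "x ! 0 = 0" and step: "\<And>i. Suc i < length x \<Longrightarrow> x ! Suc i \<le> Suc (x ! i)"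
  shows "is_ascent_seq x"
proof -
  have bound: "x ! j \<le> asc (take (Suc j) x)" if "j < length x" for j
    using that
  proof (induction j)
    case 0
    then show ?case using assms(2) by simp
  next
    case (Suc j)
    have "take (Suc (Suc j)) x = take (Suc j) x @ [x ! Suc j]"
      using Suc.prems by (simp add: take_Suc_conv_app_nth)
    moreover have "last (take (Suc j) x) = x ! j"
      using Suc.prems by (simp add: take_Suc_conv_app_nth)
    ultimately show ?case
      using Suc.IH step[of j] Suc.prems by (auto simp: asc_snoc)
  qed
  show ?thesis
    unfolding is_ascent_seq_def
  proof (intro conjI allI impI)
    fix i assume "0 < i \<and> i < length x"
    then obtain j where "i = Suc j" "Suc j < length x"
      by (cases i) auto
    then show "x ! i \<le> 1 + asc (take i x)"
      using bound[of j] step[of j] by simp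
  qed (use assms in auto)
qed

section \<open>The five patterns\<close>

abbreviation forbidden :: "nat list set" where
  "forbidden \<equiv> {[0,1,0,1], [0,1,0,2], [0,1,1,2], [0,1,2,0], [0,1,2,1]}"

definition forbidden_type :: "nat \<Rightarrow> nat \<Rightarrow> nat \<Rightarrow> nat \<Rightarrow> bool" where
  "forbidden_type a b c d \<longleftrightarrow>
     (a = c \<and> b = d \<and> a < b) \<or> (a = c \<and> a < b \<and> b < d) \<or> (a < b \<and> b = c \<and> c < d) \<or>
     (a = d \<and> a < b \<and> b < c) \<or> (a < b \<and> b = d \<and> b < c)"

lemma red_mem_forbidden_iff: "red [a, b, c, d] \<in> forbidden \<longleftrightarrow> forbidden_type a b c d"
proof -
  have order_type: "red [a, b, c, d] = p \<longleftrightarrow>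
      (\<forall>i < 4. \<forall>j < 4. [a, b, c, d] ! i < [a, b, c, d] ! j \<longleftrightarrow> p ! i < p ! j)"
    if "p \<in> forbidden" for p
    using that by (intro red_eq_pattern_iff[where k = "Max (set p) + 1", THEN trans]) auto
  have "red [a, b, c, d] = [0, 1, 0, 1] \<longleftrightarrow> a = c \<and> b = d \<and> a < b"
    "red [a, b, c, d] = [0, 1, 0, 2] \<longleftrightarrow> a = c \<and> a < b \<and> b < d"
    "red [a, b, c, d] = [0, 1, 1, 2] \<longleftrightarrow> a < b \<and> b = c \<and> c < d"
    "red [a, b, c, d] = [0, 1, 2, 0] \<longleftrightarrow> a = d \<and> a < b \<and> b < c"
    "red [a, b, c, d] = [0, 1, 2, 1] \<longleftrightarrow> a < b \<and> b = d \<and> b < c"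
    by (simp_all add: order_type All_less_Suc numeral_eq_Suc) auto
  then show ?thesis
    unfolding forbidden_type_def by simp
qed

definition forbidden_free :: "nat list \<Rightarrow> bool" where
  "forbidden_free x \<longleftrightarrow> (\<forall>i j k l. i < j \<longrightarrow> j < k \<longrightarrow> k < l \<longrightarrow> l < length x \<longrightarrow>
     \<not> forbidden_type (x ! i) (x ! j) (x ! k) (x ! l))"

lemma avoids_forbidden_iff: "(\<forall>p \<in> forbidden. avoids x p) \<longleftrightarrow> forbidden_free x"
proof -
  have "(\<exists>p \<in> forbidden. contains x p) \<longleftrightarrow>
      (\<exists>is. sorted_wrt (<) is \<and> (\<forall>i \<in> set is. i < length x) \<and> red (map ((!) x) is) \<in> forbidden)"
    unfolding contains_iff_indices by blast
  also have "\<dots> \<longleftrightarrow> (\<exists>i j k l. i < j \<and> j < k \<and> k < l \<and> l < length x \<and>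
      red [x ! i, x ! j, x ! k, x ! l] \<in> forbidden)"
  proof
    assume "\<exists>is. sorted_wrt (<) is \<and> (\<forall>i \<in> set is. i < length x) \<and> red (map ((!) x) is) \<in> forbidden"
    then obtain "is" where "is": "sorted_wrt (<) is" "\<forall>i \<in> set is. i < length x"
      "red (map ((!) x) is) \<in> forbidden"
      by blast
    moreover have "\<forall>p \<in> forbidden. length p = 4"
      by simp
    ultimately have "length is = 4"
      by (metis length_map length_red)
    then obtain i j k l where "is = [i, j, k, l]"
      by (auto simp: length_Suc_conv numeral_eq_Suc)
    then show "\<exists>i j k l. i < j \<and> j < k \<and> k < l \<and> l < length x \<and>
        red [x ! i, x ! j, x ! k, x ! l] \<in> forbidden"
      using "is" by auto
  next
    assume "\<exists>i j k l. i < j \<and> j < k \<and> k < l \<and> l < length x \<and>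
        red [x ! i, x ! j, x ! k, x ! l] \<in> forbidden"
    then obtain i j k l where "i < j" "j < k" "k < l" "l < length x"
        "red [x ! i, x ! j, x ! k, x ! l] \<in> forbidden"
      by blast
    then show "\<exists>is. sorted_wrt (<) is \<and> (\<forall>i \<in> set is. i < length x) \<and>
        red (map ((!) x) is) \<in> forbidden"
      by (intro exI[of _ "[i, j, k, l]"]) auto
  qed
  finally show ?thesis
    unfolding avoids_def forbidden_free_def red_mem_forbidden_iff by blast
qed

lemma forbidden_free_snoc:
  "forbidden_free (x @ [v]) \<longleftrightarrow> forbidden_free x \<and>
     (\<forall>i j k. i < j \<longrightarrow> j < k \<longrightarrow> k < length x \<longrightarrow> \<not> forbidden_type (x ! i) (x ! j) (x ! k) v)"
  unfolding forbidden_free_def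
  by (auto simp: nth_append less_Suc_eq)

section \<open>The avoiding ascent sequences\<close>

definition one_block :: "nat \<Rightarrow> nat \<Rightarrow> nat \<Rightarrow> nat list" where
  "one_block n s t = map (\<lambda>i. if s \<le> i \<and> i < t then 1 else 0) [0..<n]"

definition ramp :: "nat \<Rightarrow> nat \<Rightarrow> nat \<Rightarrow> nat list" where
  "ramp n s e = map (\<lambda>i. if i < s then 0 else min i e - s + 1) [0..<n]"

lemma length_one_block [simp]: "length (one_block n s t) = n"
  by (simp add: one_block_def)

lemma length_ramp [simp]: "length (ramp n s e) = n"
  by (simp add: ramp_def)

lemma nth_one_block [simp]: "i < n \<Longrightarrow> one_block n s t ! i = (if s \<le> i \<and> i < t then 1 else 0)"
  by (simp add: one_block_def)

lemma nth_ramp [simp]: "i < n \<Longrightarrow> ramp n s e ! i = (if i < s then 0 else min i e - s + 1)"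
  by (simp add: ramp_def)

lemma asc_one_block_le: "asc (one_block n s t) \<le> 1"
  using asc_le_card[of "{s - 1}" "one_block n s t"] by (force split: if_splits)

lemma asc_ramp_le:
  assumes "1 \<le> s" "s \<le> e"
  shows "asc (ramp n s e) \<le> e - s + 1"
proof -
  have "asc (ramp n s e) \<le> card {s - 1..<e}"
    using assms by (intro asc_le_card) (auto simp: min_def split: if_splits)
  then show ?thesis
    using assms by simp
qed

lemma is_ascent_seq_one_block: "1 \<le> s \<Longrightarrow> 0 < n \<Longrightarrow> is_ascent_seq (one_block n s t)"
  by (rule is_ascent_seq_if_steps_le_one) (auto simp: one_block_def)

lemma is_ascent_seq_ramp: "1 \<le> s \<Longrightarrow> 0 < n \<Longrightarrow> is_ascent_seq (ramp n s e)"
  by (rule is_ascent_seq_if_steps_le_one) (auto simp: ramp_def min_def)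

lemma forbidden_free_one_block: "forbidden_free (one_block n s t)"
  by (auto simp: forbidden_free_def forbidden_type_def one_block_def)

lemma forbidden_free_ramp: "forbidden_free (ramp n s e)"
proof -
  define g where "g i = (if i < s then 0 else min i e - s + 1)" for i
  have mono: "g i \<le> g j" if "i \<le> j" for i j
    using that unfolding g_def by (auto simp: min_def)
  have plateau: "g j = 0 \<or> g l \<le> g j" if "j < k" "g j = g k" for j k l
    using that unfolding g_def by (auto simp: min_def split: if_splits)
  have "\<not> forbidden_type (g i) (g j) (g k) (g l)" if "i < j" "j < k" "k < l" for i j k l
    using mono[of i j] mono[of j k] mono[of k l] plateau[of j k l] that
    unfolding forbidden_type_def by auto
  moreover have "ramp n s e = map g [0..<n]"
    by (simp add: ramp_def g_def)
  ultimately show ?thesis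
    by (simp add: forbidden_free_def)
qed

definition pair_avoider :: "nat \<Rightarrow> nat \<times> nat \<Rightarrow> nat list" where
  "pair_avoider n = (\<lambda>(a, b). if a \<le> b then one_block n a (Suc b) else ramp n b a)"

definition avoider_set :: "nat \<Rightarrow> nat list set" where
  "avoider_set n = insert (replicate n 0) (pair_avoider n ` ({1..<n} \<times> {1..<n}))"

lemma replicate_mem_avoider_set: "replicate n 0 \<in> avoider_set n"
  by (simp add: avoider_set_def)

lemma one_block_mem_avoider_set:
  "1 \<le> s \<Longrightarrow> s < t \<Longrightarrow> t \<le> n \<Longrightarrow> one_block n s t \<in> avoider_set n"
  unfolding avoider_set_def by (intro insertI2 image_eqI[of _ _ "(s, t - 1)"]) (auto simp: pair_avoider_def)

lemma ramp_mem_avoider_set: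
  "1 \<le> s \<Longrightarrow> s < e \<Longrightarrow> e < n \<Longrightarrow> ramp n s e \<in> avoider_set n"
  unfolding avoider_set_def by (intro insertI2 image_eqI[of _ _ "(e, s)"]) (auto simp: pair_avoider_def)

lemma mem_avoider_set_iff:
  "x \<in> avoider_set n \<longleftrightarrow> x = replicate n 0 \<or>
     (\<exists>s t. 1 \<le> s \<and> s < t \<and> t \<le> n \<and> x = one_block n s t) \<or>
     (\<exists>s e. 1 \<le> s \<and> s < e \<and> e < n \<and> x = ramp n s e)"
    (is "_ \<longleftrightarrow> _ \<or> ?block \<or> ?ramp")
proof
  assume "x \<in> avoider_set n"
  then consider "x = replicate n 0"
    | a b where "x = (if a \<le> b then one_block n a (Suc b) else ramp n b a)"
        "1 \<le> a" "a < n" "1 \<le> b" "b < n"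
    unfolding avoider_set_def pair_avoider_def by fastforce
  then show "x = replicate n 0 \<or> ?block \<or> ?ramp"
  proof cases
    case (2 a b)
    show ?thesis
    proof (cases "a \<le> b")
      case True
      then have ?block
        using 2 by (intro exI[of _ a] exI[of _ "Suc b"]) auto
      then show ?thesis by blast
    next
      case False
      then have ?ramp
        using 2 by (intro exI[of _ b] exI[of _ a]) auto
      then show ?thesis by blast
    qed
  qed simp
next
  show "x = replicate n 0 \<or> ?block \<or> ?ramp \<Longrightarrow> x \<in> avoider_set n"
    using replicate_mem_avoider_set one_block_mem_avoider_set ramp_mem_avoider_set by blast
qed

lemma avoider_set_sound:
  assumes "x \<in> avoider_set n" "0 < n"
  shows "length x = n \<and> is_ascent_seq x \<and> forbidden_free x"
proof -
  have "is_ascent_seq (replicate n 0)"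
    using assms(2) by (intro is_ascent_seq_if_steps_le_one) auto
  moreover have "forbidden_free (replicate n 0)"
    by (simp add: forbidden_free_def forbidden_type_def)
  ultimately show ?thesis
    using assms unfolding mem_avoider_set_iff
    by (auto simp: is_ascent_seq_one_block is_ascent_seq_ramp
        forbidden_free_one_block forbidden_free_ramp)
qed

lemma snoc_replicate_mem_avoider_set:
  assumes "1 \<le> m" "v \<le> 1"
  shows "replicate m 0 @ [v] \<in> avoider_set (Suc m)"
proof -
  consider "v = 0" | "v = 1"
    using assms(2) by linarith
  then show ?thesis
  proof cases
    case 1
    then show ?thesis
      using replicate_mem_avoider_set[of "Suc m"] by (simp add: replicate_append_same)
  next
    case 2
    then have "replicate m 0 @ [v] = one_block (Suc m) m (Suc m)"
      by (intro nth_equalityI) (auto simp: nth_append)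
    then show ?thesis
      using assms(1) by (simp add: one_block_mem_avoider_set)
  qed
qed

lemma snoc_one_block_mem_avoider_set:
  fixes m s t v :: nat
  defines "x \<equiv> one_block m s t"
  assumes st: "1 \<le> s" "s < t" "t \<le> m" and "v \<le> 2"
    and fresh: "\<And>i j k. i < j \<Longrightarrow> j < k \<Longrightarrow> k < m \<Longrightarrow> \<not> forbidden_type (x ! i) (x ! j) (x ! k) v"
  shows "x @ [v] \<in> avoider_set (Suc m)"
proof -
  consider "v = 0" | "v = 1" "t = m" | "v = 2" "t = m" "t = Suc s" | "v = 1" "t < m"
    | "v = 2" "t = m" "Suc s < m" | "v = 2" "t < m"
    using \<open>v \<le> 2\<close> st by linarith
  then show ?thesis
  proof cases
    case 1
    then have "x @ [v] = one_block (Suc m) s t"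
      using st unfolding x_def by (intro nth_equalityI) (auto simp: nth_append)
    then show ?thesis
      using st by (simp add: one_block_mem_avoider_set)
  next
    case 2
    then have "x @ [v] = one_block (Suc m) s (Suc m)"
      using st unfolding x_def by (intro nth_equalityI) (auto simp: nth_append)
    then show ?thesis
      using st by (simp add: one_block_mem_avoider_set)
  next
    case 3
    then have "x @ [v] = ramp (Suc m) s m"
      using st unfolding x_def by (intro nth_equalityI) (auto simp: nth_append)
    then show ?thesis
      using st 3 by (simp add: ramp_mem_avoider_set)
  next
    case 4 \<comment> \<open>0 1 0 1 at positions 0, s, t, m\<close>
    then show ?thesis
      using fresh[of 0 s t] st by (simp add: x_def forbidden_type_def)
  next
    case 5 \<comment> \<open>0 1 1 2 at positions 0, s, s + 1, m\<close>
    then show ?thesis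
      using fresh[of 0 s "Suc s"] st by (simp add: x_def forbidden_type_def)
  next
    case 6 \<comment> \<open>0 1 0 2 at positions 0, s, t, m\<close>
    then show ?thesis
      using fresh[of 0 s t] st by (simp add: x_def forbidden_type_def)
  qed
qed

lemma snoc_ramp_mem_avoider_set:
  fixes m s e v :: nat
  defines "x \<equiv> ramp m s e"
  assumes se: "1 \<le> s" "s < e" "e < m" and "v \<le> e - s + 2"
    and fresh: "\<And>i j k. i < j \<Longrightarrow> j < k \<Longrightarrow> k < m \<Longrightarrow> \<not> forbidden_type (x ! i) (x ! j) (x ! k) v"
  shows "x @ [v] \<in> avoider_set (Suc m)"
proof -
  have x0: "x ! 0 = 0"
    using se by (simp add: x_def)
  have top: "x ! i = e - s + 1" if "e \<le> i" "i < m" for i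
    using se that by (simp add: x_def)
  consider "v = e - s + 1" | "v = e - s + 2" "Suc e = m" | "v = e - s + 2" "Suc e < m"
    | "v = 0" | "0 < v" "v < e - s + 1"
    using \<open>v \<le> e - s + 2\<close> se by linarith
  then show ?thesis
  proof cases
    case 1
    then have "x @ [v] = ramp (Suc m) s e"
      using se unfolding x_def by (intro nth_equalityI) (auto simp: nth_append)
    then show ?thesis
      using se by (simp add: ramp_mem_avoider_set)
  next
    case 2
    then have "x @ [v] = ramp (Suc m) s m"
      using se unfolding x_def by (intro nth_equalityI) (auto simp: nth_append min_def)
    then show ?thesis
      using se by (simp add: ramp_mem_avoider_set)
  next
    case 3 \<comment> \<open>0 1 1 2 at positions 0, e, e + 1, m\<close>
    then show ?thesis
      using fresh[of 0 e "Suc e"] x0 top[of e] top[of "Suc e"] se by (simp add: forbidden_type_def)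
  next
    case 4 \<comment> \<open>0 1 2 0 at positions 0, s, e, m\<close>
    have "x ! s = 1"
      using se by (simp add: x_def)
    then show ?thesis
      using fresh[of 0 s e] x0 top[of e] 4 se by (simp add: forbidden_type_def)
  next
    case 5 \<comment> \<open>0 1 2 1 at positions 0, s + v - 1, e, m\<close>
    have k: "s \<le> s + v - 1" "s + v - 1 < e"
      using se 5 by linarith+
    then have "x ! (s + v - 1) = v"
      using se 5 by (simp add: x_def)
    then show ?thesis
      using fresh[of 0 "s + v - 1" e] x0 top[of e] k 5 se by (simp add: forbidden_type_def)
  qed
qed

lemma snoc_mem_avoider_set:
  assumes "x \<in> avoider_set (length x)" "x \<noteq> []" "v \<le> 1 + asc x"
    and fresh: "\<And>i j k. i < j \<Longrightarrow> j < k \<Longrightarrow> k < length x \<Longrightarrow>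
      \<not> forbidden_type (x ! i) (x ! j) (x ! k) v"
  shows "x @ [v] \<in> avoider_set (Suc (length x))"
proof -
  from assms(1) consider "x = replicate (length x) 0"
    | s t where "1 \<le> s" "s < t" "t \<le> length x" "x = one_block (length x) s t"
    | s e where "1 \<le> s" "s < e" "e < length x" "x = ramp (length x) s e"
    unfolding mem_avoider_set_iff by blast
  then show ?thesis
  proof cases
    case 1
    then have "asc x = 0"
      by (metis asc_replicate)
    then show ?thesis
      using snoc_replicate_mem_avoider_set[of "length x" v] assms(2,3) 1 by (simp add: Suc_leI)
  next
    case (2 s t)
    then show ?thesis
      using snoc_one_block_mem_avoider_set[of s t "length x" v] asc_one_block_le[of "length x" s t]
        assms(3) fresh by simp
  next
    case (3 s e)
    then show ?thesis
      using snoc_ramp_mem_avoider_set[of s e "length x" v] asc_ramp_le[of s e "length x"]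
        assms(3) fresh by simp
  qed
qed

lemma mem_avoider_set_if_avoiding:
  "is_ascent_seq x \<Longrightarrow> forbidden_free x \<Longrightarrow> x \<in> avoider_set (length x)"
proof (induction x rule: rev_induct)
  case Nil
  then show ?case by (simp add: is_ascent_seq_def)
next
  case (snoc v x)
  show ?case
  proof (cases "x = []")
    case True
    then have "v = 0"
      using snoc.prems(1) by (simp add: is_ascent_seq_def)
    then show ?thesis
      using True replicate_mem_avoider_set[of 1] by simp
  next
    case False
    with snoc.prems show ?thesis
      using snoc.IH is_ascent_seq_snocD[OF snoc.prems(1) False]
      by (auto simp: forbidden_free_snoc intro: snoc_mem_avoider_set)
  qed
qed

lemma avoiding_ascent_seqs_eq_avoider_set:
  assumes "0 < n"
  shows "{x. length x = n \<and> is_ascent_seq x \<and> (\<forall>p \<in> forbidden. avoids x p)} = avoider_set n"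
  using mem_avoider_set_if_avoiding avoider_set_sound[OF _ assms]
  unfolding avoids_forbidden_iff by blast

section \<open>Counting\<close>

lemma one_block_inject:
  assumes "s < t" "t \<le> n" "s' < t'" "t' \<le> n" "one_block n s t = one_block n s' t'"
  shows "s = s' \<and> t = t'"
proof -
  have ones: "{i. i < n \<and> one_block n s t ! i = 1} = {s..<t}" if "t \<le> n" for s t
    using that by (auto split: if_splits)
  show ?thesis
    using ones[of t s] ones[of t' s'] assms atLeastLessThan_inj[of s t s' t'] by simp
qed

lemma ramp_inject:
  assumes "s < e" "e < n" "s' < e'" "e' < n" "ramp n s e = ramp n s' e'"
  shows "s = s' \<and> e = e'"
proof -
  have zeros: "{i. i < n \<and> ramp n s e ! i = 0} = {..<s}" if "s < n" for s e
    using that by (auto split: if_splits)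
  have top: "{i. i < n \<and> ramp n s e ! i = ramp n s e ! (n - 1)} = {e..<n}" if "s < e" "e < n" for s e
    using that by (auto simp: min_def split: if_splits)
  show ?thesis
    using zeros[of s e] zeros[of s' e'] top[of s e] top[of s' e'] assms
      atLeastLessThan_inj[of e n e' n] by auto
qed

lemma one_block_ne_ramp:
  assumes "s' < e" "e < n"
  shows "one_block n s t \<noteq> ramp n s' e"
proof
  assume "one_block n s t = ramp n s' e"
  then have "one_block n s t ! e = ramp n s' e ! e"
    by simp
  then show False
    using assms by (simp split: if_splits)
qed

lemma inj_on_pair_avoider: "inj_on (pair_avoider n) ({1..<n} \<times> {1..<n})"
proof -
  have "(a, b) = (a', b')"
    if "a \<in> {1..<n}" "b \<in> {1..<n}" "a' \<in> {1..<n}" "b' \<in> {1..<n}"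
      "pair_avoider n (a, b) = pair_avoider n (a', b')"
    for a b a' b'
    using that one_block_inject[of a "Suc b" n a' "Suc b'"] ramp_inject[of b a n b' a']
      one_block_ne_ramp[of b' a' n a "Suc b"] one_block_ne_ramp[of b a n a' "Suc b'"]
    by (auto simp: pair_avoider_def split: if_splits)
  then show ?thesis
    by (intro inj_onI) auto
qed

lemma replicate_notin_pair_avoider: "replicate n 0 \<notin> pair_avoider n ` ({1..<n} \<times> {1..<n})"
proof
  assume "replicate n 0 \<in> pair_avoider n ` ({1..<n} \<times> {1..<n})"
  then obtain a b where ab: "a \<in> {1..<n}" "b \<in> {1..<n}" "replicate n 0 = pair_avoider n (a, b)"
    by auto
  then have "replicate n 0 ! b = pair_avoider n (a, b) ! b"
    by simp
  then show False
    using ab(1,2) by (auto simp: pair_avoider_def split: if_splits)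
qed

lemma card_avoider_set: "card (avoider_set n) = (n - 1)^2 + 1"
  using inj_on_pair_avoider[of n] replicate_notin_pair_avoider[of n]
  by (simp add: avoider_set_def card_image card_cartesian_product power2_eq_square)

theorem theorem5p3:
  fixes n :: nat
  assumes "n \<ge> 1"
  shows "a_P {[0,1,0,1], [0,1,0,2], [0,1,1,2], [0,1,2,0], [0,1,2,1]} n = (n - 1)^2 + 1"
proof -
  have "0 < n"
    using assms by simp
  show ?thesis
    unfolding a_P_def avoiding_ascent_seqs_eq_avoider_set[OF \<open>0 < n\<close>] card_avoider_set ..
qed

end
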